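(* Let $G$ be a group. Call a finite subset $A\subseteq G$ \emph{strongly independent} if no subgroup of $G$ containing $A$ can be generated by fewer than $|A|$ elements. Then: (i) every subset of a finite strongly independent subset of $G$ is strongly independent, so the finite strongly independent subsets form a simplicial complex (the \emph{strong independence complex} of $G$); (ii) for $g\in G$, $\{g\}$ is strongly independent if and only if $g\neq 1$, so the vertices of this complex are exactly the non-identity elements of $G$; (iii) the $1$-skeleton of the strong independence complex is the complement of the enhanced power graph of $G$; that is, for distinct non-identity $x,y\in G$, the set $\{x,y\}$ is strongly independent if and only if $\langle x,y\rangle$ is not cyclic.
   Context: A simplicial complex on a set $X$ is a downward-closed collection of finite subsets (simplices) of $X$; its $1$-skeleton is the graph formed by the simplices of cardinality at most $2$. The enhanced power graph of $G$ is the graph on $G$ in which $x$ and $y$ are adjacent if and only if $\langle x,y\rangle$ is a cyclic group. *)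

theory Defs
  imports "HOL-Algebra.Elementary_Groups"
begin

definition strongly_independent :: "('a, 'b) monoid_scheme \<Rightarrow> 'a set \<Rightarrow> bool" where
  "strongly_independent G A \<longleftrightarrow>
     finite A \<and> A \<subseteq> carrier G \<and>
     (\<forall>H. subgroup H G \<and> A \<subseteq> H \<longrightarrow>
        \<not> (\<exists>S. finite S \<and> S \<subseteq> H \<and> card S < card A \<and> generate G S = H))"

end

theory Submission
  imports Defs
begin

text \<open>A finite set \<open>A\<close> is strongly independent iff no set of fewer than \<open>|A|\<close> elements
generates a subgroup containing \<open>A\<close>. If \<open>B \<subseteq> A\<close> and a small set \<open>S\<close> generated a
subgroup containing \<open>B\<close>, then \<open>S \<union> (A - B)\<close>, which is smaller than \<open>A\<close>, would generate
a subgroup containing \<open>A\<close>. The only set smaller than a singleton is the empty set, which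
generates the trivial group. The sets smaller than a pair \<open>{x, y}\<close> are the empty set and
singletons, and \<open>{x, y} \<subseteq> \<langle>a\<rangle>\<close> happens exactly when \<open>\<langle>x, y\<rangle>\<close> is cyclic: if
\<open>x = a\<^sup>m\<close> and \<open>y = a\<^sup>n\<close>, then \<open>\<langle>x, y\<rangle> = \<langle>a\<^bsup>gcd m n\<^esup>\<rangle>\<close> by Bezout.\<close>

lemma (in group) strongly_independent_iff:
  "strongly_independent G A \<longleftrightarrow>
     finite A \<and> A \<subseteq> carrier G \<and>
     (\<forall>S. finite S \<and> S \<subseteq> carrier G \<and> A \<subseteq> generate G S \<longrightarrow> card A \<le> card S)"
proof -
  have "(\<forall>H. subgroup H G \<and> A \<subseteq> H \<longrightarrow>
           \<not> (\<exists>S. finite S \<and> S \<subseteq> H \<and> card S < card A \<and> generate G S = H))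
      \<longleftrightarrow> (\<forall>S. finite S \<and> S \<subseteq> carrier G \<and> A \<subseteq> generate G S \<longrightarrow> card A \<le> card S)"
  proof (intro iffI allI impI notI; (elim conjE exE)?)
    fix S
    assume "\<forall>H. subgroup H G \<and> A \<subseteq> H \<longrightarrow>
        \<not> (\<exists>S. finite S \<and> S \<subseteq> H \<and> card S < card A \<and> generate G S = H)"
      and "finite S" "S \<subseteq> carrier G" "A \<subseteq> generate G S"
    then show "card A \<le> card S"
      using generate_is_subgroup[of S] generate.incl[of _ S G] by (metis not_le subsetI)
  next
    fix H S
    assume "\<forall>S. finite S \<and> S \<subseteq> carrier G \<and> A \<subseteq> generate G S \<longrightarrow> card A \<le> card S"
      and "subgroup H G" "A \<subseteq> H" "finite S" "S \<subseteq> H" "card S < card A" "generate G S = H"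
    then show False
      using subgroup.subset by (metis dual_order.trans not_le)
  qed
  then show ?thesis
    unfolding strongly_independent_def by blast
qed

lemma (in group) strongly_independent_subset:
  assumes indep: "strongly_independent G A" and "B \<subseteq> A"
  shows "strongly_independent G B"
proof -
  have "finite A" "A \<subseteq> carrier G"
    using indep by (simp_all add: strongly_independent_iff)
  have A_min: "card A \<le> card T"
    if "finite T" "T \<subseteq> carrier G" "A \<subseteq> generate G T" for T
    using indep that by (simp add: strongly_independent_iff)
  have "card B \<le> card S"
    if "finite S" "S \<subseteq> carrier G" "B \<subseteq> generate G S" for S
  proof -
    let ?T = "S \<union> (A - B)"
    have "generate G S \<subseteq> generate G ?T"
      by (rule mono_generate) (rule Un_upper1)
    moreover have "A - B \<subseteq> generate G ?T"
      using generate.incl[of _ ?T G] by blast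
    ultimately have "A \<subseteq> generate G ?T"
      using \<open>B \<subseteq> generate G S\<close> by blast
    moreover have "finite ?T" "?T \<subseteq> carrier G"
      using that \<open>finite A\<close> \<open>A \<subseteq> carrier G\<close> by auto
    ultimately have "card A \<le> card ?T"
      by (intro A_min)
    also have "\<dots> \<le> card S + (card A - card B)"
      using card_Un_le[of S "A - B"] card_Diff_subset[OF finite_subset[OF \<open>B \<subseteq> A\<close>] \<open>B \<subseteq> A\<close>]
        \<open>finite A\<close> by simp
    finally show ?thesis
      using card_mono[OF \<open>finite A\<close> \<open>B \<subseteq> A\<close>] by linarith
  qed
  moreover have "finite B" "B \<subseteq> carrier G"
    using \<open>finite A\<close> \<open>A \<subseteq> carrier G\<close> \<open>B \<subseteq> A\<close> finite_subset by blast+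
  ultimately show ?thesis
    by (simp add: strongly_independent_iff)
qed

lemma (in group) strongly_independent_singleton_iff:
  assumes "g \<in> carrier G"
  shows "strongly_independent G {g} \<longleftrightarrow> g \<noteq> \<one>"
proof -
  have "strongly_independent G {g} \<longleftrightarrow>
      (\<forall>S. finite S \<and> S \<subseteq> carrier G \<and> g \<in> generate G S \<longrightarrow> S \<noteq> {})"
    using assms by (auto simp: strongly_independent_iff Suc_le_eq card_gt_0_iff)
  also have "\<dots> \<longleftrightarrow> g \<notin> generate G {}"
    by blast
  finally show ?thesis
    by (simp add: generate_empty)
qed

lemma (in group) generate_pair_of_powers:
  fixes m n :: int
  assumes a: "a \<in> carrier G"
  shows "generate G {a [^] m, a [^] n} = generate G {a [^] gcd m n}"
proof
  have "a [^] m = (a [^] gcd m n) [^] (m div gcd m n)"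
    "a [^] n = (a [^] gcd m n) [^] (n div gcd m n)"
    by (simp_all add: int_pow_pow a)
  moreover have "subgroup (generate G {a [^] gcd m n}) G"
    using a by (simp add: generate_is_subgroup)
  ultimately have "{a [^] m, a [^] n} \<subseteq> generate G {a [^] gcd m n}"
    by (auto intro: subgroup_int_pow_closed generate.incl)
  then show "generate G {a [^] m, a [^] n} \<subseteq> generate G {a [^] gcd m n}"
    using generate_subgroup_incl generate_is_subgroup a by simp
next
  define H where "H = generate G {a [^] m, a [^] n}"
  have H: "subgroup H G"
    using a unfolding H_def by (simp add: generate_is_subgroup)
  obtain u v where "u * m + v * n = gcd m n"
    using bezout_int by metis
  then have "a [^] gcd m n = a [^] (m * u + n * v)"
    by (simp add: mult.commute)
  also have "\<dots> = (a [^] m) [^] u \<otimes> (a [^] n) [^] v"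
    using a by (simp add: int_pow_mult int_pow_pow)
  also have "\<dots> \<in> H"
    using H a generate.incl[of _ "{a [^] m, a [^] n}" G]
    by (simp add: H_def subgroup.m_closed subgroup_int_pow_closed)
  finally show "generate G {a [^] gcd m n} \<subseteq> H"
    using generate_subgroup_incl[OF _ H] by simp
qed

lemma (in group) cyclic_group_subgroup_generated_iff:
  assumes "A \<subseteq> carrier G"
  shows "cyclic_group (subgroup_generated G A) \<longleftrightarrow> (\<exists>a \<in> carrier G. generate G A = generate G {a})"
proof
  have gen: "subgroup_generated G A = G\<lparr>carrier := generate G A\<rparr>"
    using assms by (simp add: subgroup_generated_def Int_absorb1)
  assume "cyclic_group (subgroup_generated G A)"
  then obtain a where a_in: "a \<in> carrier (subgroup_generated G A)"
    and eq: "subgroup_generated (subgroup_generated G A) {a} = subgroup_generated G A"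
    unfolding cyclic_group_def by (elim bexE)
  have a: "a \<in> generate G A"
    using a_in by (simp add: gen)
  have "generate (subgroup_generated G A) {a} = carrier (subgroup_generated G A)"
    using arg_cong[OF eq, of carrier] a_in
    by (simp only: carrier_subgroup_generated Int_insert_right_if1 Int_empty_right)
  then have "generate G {a} = generate G A"
    using generate_consistent[OF _ generate_is_subgroup[OF assms], of "{a}"] a by (simp add: gen)
  then show "\<exists>a \<in> carrier G. generate G A = generate G {a}"
    using a generate_in_carrier[OF assms] by auto
next
  assume "\<exists>a \<in> carrier G. generate G A = generate G {a}"
  then obtain a where "a \<in> carrier G" "generate G A = generate G {a}"
    by blast
  then have "subgroup_generated G A = subgroup_generated G {a}"
    using assms by (simp add: subgroup_generated_def Int_absorb1)
  then show "cyclic_group (subgroup_generated G A)"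
    by (simp add: cyclic_group_generated)
qed

lemma (in group) cyclic_group_subgroup_generated_pair_iff:
  assumes "x \<in> carrier G" "y \<in> carrier G"
  shows "cyclic_group (subgroup_generated G {x, y}) \<longleftrightarrow> (\<exists>a \<in> carrier G. {x, y} \<subseteq> generate G {a})"
proof -
  have "(\<exists>a \<in> carrier G. generate G {x, y} = generate G {a}) \<longleftrightarrow>
      (\<exists>a \<in> carrier G. {x, y} \<subseteq> generate G {a})"
  proof
    assume "\<exists>a \<in> carrier G. generate G {x, y} = generate G {a}"
    then show "\<exists>a \<in> carrier G. {x, y} \<subseteq> generate G {a}"
      using generate.incl[of _ "{x, y}" G] by auto
  next
    assume "\<exists>a \<in> carrier G. {x, y} \<subseteq> generate G {a}"
    then obtain a where a: "a \<in> carrier G" and "x \<in> generate G {a}" "y \<in> generate G {a}"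
      by auto
    then obtain m n :: int where "x = a [^] m" "y = a [^] n"
      unfolding generate_pow[OF a] by blast
    then have "generate G {x, y} = generate G {a [^] gcd m n}"
      using a by (simp add: generate_pair_of_powers)
    then show "\<exists>a \<in> carrier G. generate G {x, y} = generate G {a}"
      using a by auto
  qed
  then show ?thesis
    using assms by (simp add: cyclic_group_subgroup_generated_iff)
qed

lemma (in group) strongly_independent_pair_iff:
  assumes "x \<in> carrier G" "y \<in> carrier G" "x \<noteq> y"
  shows "strongly_independent G {x, y} \<longleftrightarrow> \<not> cyclic_group (subgroup_generated G {x, y})"
proof -
  have "strongly_independent G {x, y} \<longleftrightarrow>
      (\<forall>S. finite S \<and> S \<subseteq> carrier G \<and> {x, y} \<subseteq> generate G S \<longrightarrow> \<not> card S < 2)"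
    using assms by (simp add: strongly_independent_iff not_less numeral_2_eq_2)
  also have "\<dots> \<longleftrightarrow> \<not> (\<exists>a \<in> carrier G. {x, y} \<subseteq> generate G {a})"
  proof (intro iffI notI allI impI)
    assume no_small: "\<forall>S. finite S \<and> S \<subseteq> carrier G \<and> {x, y} \<subseteq> generate G S \<longrightarrow> \<not> card S < 2"
    assume "\<exists>a \<in> carrier G. {x, y} \<subseteq> generate G {a}"
    then obtain a where "a \<in> carrier G" "{x, y} \<subseteq> generate G {a}"
      by (elim bexE)
    then show False
      using no_small[rule_format, of "{a}"] by simp
  next
    fix S
    assume not_cyclic: "\<not> (\<exists>a \<in> carrier G. {x, y} \<subseteq> generate G {a})"
      and S: "finite S \<and> S \<subseteq> carrier G \<and> {x, y} \<subseteq> generate G S" and "card S < 2"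
    then consider "S = {}" | a where "S = {a}"
      by (auto simp: less_2_cases_iff card_1_singleton_iff)
    then show False
    proof cases
      case 1
      then show False
        using S assms(3) by (simp add: generate_empty)
    next
      case 2
      then show False
        using S not_cyclic by auto
    qed
  qed
  finally show ?thesis
    using assms by (simp add: cyclic_group_subgroup_generated_pair_iff)
qed

theorem mainTheorem2:
  fixes G (structure)
  assumes "group G"
  shows "(\<forall>A B. strongly_independent G A \<and> B \<subseteq> A \<longrightarrow> strongly_independent G B)
       \<and> (\<forall>g \<in> carrier G. strongly_independent G {g} \<longleftrightarrow> g \<noteq> \<one>)
       \<and> (\<forall>x \<in> carrier G. \<forall>y \<in> carrier G. x \<noteq> y \<and> x \<noteq> \<one> \<and> y \<noteq> \<one> \<longrightarrow>
            (strongly_independent G {x, y} \<longleftrightarrow> \<not> cyclic_group (subgroup_generated G {x, y})))"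
proof (intro conjI allI impI ballI)
  interpret group G by fact
  fix A B
  assume "strongly_independent G A \<and> B \<subseteq> A"
  then show "strongly_independent G B"
    by (auto intro: strongly_independent_subset)
next
  interpret group G by fact
  fix g
  assume "g \<in> carrier G"
  then show "strongly_independent G {g} \<longleftrightarrow> g \<noteq> \<one>"
    by (rule strongly_independent_singleton_iff)
next
  interpret group G by fact
  fix x y
  assume "x \<in> carrier G" "y \<in> carrier G" "x \<noteq> y \<and> x \<noteq> \<one> \<and> y \<noteq> \<one>"
  then show "strongly_independent G {x, y} \<longleftrightarrow> \<not> cyclic_group (subgroup_generated G {x, y})"
    by (simp add: strongly_independent_pair_iff)
qed

end
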